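(* The Recursive Measure satisfies the added-YES-blocker postulate. For every SVG $\mathcal{G}=(N,\mathcal{W})$ and all $i,j\in N$ with $j$ not a dummy in $\mathcal{G}$: $$\frac{RM'^+_i(\mathcal{G})}{RM'^+_j(\mathcal{G})}=\frac{RM'^+_i(\mathcal{G}^Y)}{RM'^+_j(\mathcal{G}^Y)}.$$
   Context: A simple voting game (SVG) is a pair $\mathcal{G}=(N,\mathcal{W})$ with $N$ a nonempty finite set of players and $\mathcal{W}\subseteq 2^N$ monotone, $\emptyset\notin\mathcal{W}$, $N\in\mathcal{W}$. Divisions are identified with their YES-sets. Decisiveness and success: - Player $k$ is YES-decisive in $S$ if $k\in S\in\mathcal{W}$ and $S\setminus\{k\}\notin\mathcal{W}$. - Player $k$ is NO-decisive in $S$ if $k\notin S\notin\mathcal{W}$ and $S\cup\{k\}\in\mathcal{W}$. - A dummy is never decisive. - Player $k$ is successful in $S$ if ($k\in S\in\mathcal{W}$) or ($k\notin S\notin\mathcal{W}$). Loyal children: if $S\in\mathcal{W}$, they are the sets $S\setminus\{m\}\in\mathcal{W}$ with $m\in S$. If $S\notin\mathcal{W}$, they are the sets $S\cup\{m\}\notin\mathcal{W}$ with $m\notin S$. Recursive efficacy score $\alpha_k(S)$: - $\alpha_k(S)=1$ if $k$ is decisive; - $\alpha_k(S)=0$ if $k$ is not successful; - otherwise, the average of $\alpha_k$ over the loyal children. For a game with $m$ players, the a priori RM YES-power is $RM'^+_k=2^{-m}\sum_{S\ni k}\alpha_k(S)$. For a new player $0\notin N$, $\mathcal{G}^Y=(N\cup\{0\},\{S\cup\{0\}:S\in\mathcal{W}\})$.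 *)

theory Defs
  imports Complex_Main
begin

definition svg :: "'a set \<Rightarrow> 'a set set \<Rightarrow> bool" where
  "svg N W \<longleftrightarrow> finite N \<and> N \<noteq> {} \<and> W \<subseteq> Pow N
     \<and> (\<forall>S T. S \<in> W \<longrightarrow> S \<subseteq> T \<longrightarrow> T \<subseteq> N \<longrightarrow> T \<in> W)
     \<and> {} \<notin> W \<and> N \<in> W"

definition yes_decisive :: "'a set set \<Rightarrow> 'a \<Rightarrow> 'a set \<Rightarrow> bool" where
  "yes_decisive W k S \<longleftrightarrow> k \<in> S \<and> S \<in> W \<and> S - {k} \<notin> W"

definition no_decisive :: "'a set set \<Rightarrow> 'a \<Rightarrow> 'a set \<Rightarrow> bool" where
  "no_decisive W k S \<longleftrightarrow> k \<notin> S \<and> S \<notin> W \<and> insert k S \<in> W"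

definition decisive :: "'a set set \<Rightarrow> 'a \<Rightarrow> 'a set \<Rightarrow> bool" where
  "decisive W k S \<longleftrightarrow> yes_decisive W k S \<or> no_decisive W k S"

definition dummy :: "'a set \<Rightarrow> 'a set set \<Rightarrow> 'a \<Rightarrow> bool" where
  "dummy N W k \<longleftrightarrow> k \<in> N \<and> (\<forall>S. S \<subseteq> N \<longrightarrow> \<not> decisive W k S)"

definition successful :: "'a set set \<Rightarrow> 'a \<Rightarrow> 'a set \<Rightarrow> bool" where
  "successful W k S \<longleftrightarrow> (k \<in> S \<and> S \<in> W) \<or> (k \<notin> S \<and> S \<notin> W)"

definition loyal_children :: "'a set \<Rightarrow> 'a set set \<Rightarrow> 'a set \<Rightarrow> 'a set set" where
  "loyal_children N W S =
     (if S \<in> W then {S - {m} | m. m \<in> S \<and> S - {m} \<in> W}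
      else {insert m S | m. m \<in> N \<and> m \<notin> S \<and> insert m S \<notin> W})"

text \<open>The recursion
  depth never exceeds card N (each step strictly shrinks a winning set or strictly
  grows a losing set, staying inside N), so fuel Suc (card N) yields the score.\<close>
fun alpha_aux :: "nat \<Rightarrow> 'a set \<Rightarrow> 'a set set \<Rightarrow> 'a \<Rightarrow> 'a set \<Rightarrow> real" where
  "alpha_aux 0 N W k S = 0"
| "alpha_aux (Suc n) N W k S =
     (if decisive W k S then 1
      else if \<not> successful W k S then 0
      else (let C = loyal_children N W S in
            if C = {} then 0 else (\<Sum>T\<in>C. alpha_aux n N W k T) / real (card C)))"

definition alpha :: "'a set \<Rightarrow> 'a set set \<Rightarrow> 'a \<Rightarrow> 'a set \<Rightarrow> real" where
  "alpha N W k S = alpha_aux (Suc (card N)) N W k S"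

definition RM_yes :: "'a set \<Rightarrow> 'a set set \<Rightarrow> 'a \<Rightarrow> real" where
  "RM_yes N W k = (\<Sum>S\<in>{S. S \<subseteq> N \<and> k \<in> S}. alpha N W k S) / 2 ^ card N"

definition add_yes_blocker_W :: "'a set set \<Rightarrow> 'a \<Rightarrow> 'a set set" where
  "add_yes_blocker_W W p0 = {insert p0 S | S. S \<in> W}"

end

theory Submission
  imports Defs
begin

text \<open>Adding the YES-blocker p0 maps the divisions S of the old game bijectively onto the
  divisions of the new game containing p0, preserving the outcome, the decisiveness and
  success of every old player, and the loyal children; hence the efficacy scores agree
  there. Divisions without p0 are lost, so a player voting YES in them scores 0. Thus
  the RM YES-power of every old player is exactly halved, and ratios are unchanged.\<close>

definition recursion_measure :: "'a set \<Rightarrow> 'a set set \<Rightarrow> 'a set \<Rightarrow> nat" where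
  "recursion_measure N W S = (if S \<in> W then card S else card (N - S))"

lemma recursion_measure_le_card:
  "finite N \<Longrightarrow> S \<subseteq> N \<Longrightarrow> recursion_measure N W S \<le> card N"
  unfolding recursion_measure_def by (auto intro: card_mono)

lemma loyal_child_subset:
  "S \<subseteq> N \<Longrightarrow> T \<in> loyal_children N W S \<Longrightarrow> T \<subseteq> N"
  unfolding loyal_children_def by (auto split: if_splits)

lemma recursion_measure_loyal_child_less:
  assumes "finite N" "S \<subseteq> N" "T \<in> loyal_children N W S"
  shows "recursion_measure N W T < recursion_measure N W S"
proof (cases "S \<in> W")
  case True
  then obtain m where m: "T = S - {m}" "m \<in> S" "T \<in> W"
    using assms(3) by (auto simp: loyal_children_def)
  have "finite S" using assms(1,2) finite_subset by blast
  with m have "card T < card S" by (metis card_Diff1_less)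
  with m True show ?thesis by (simp add: recursion_measure_def)
next
  case False
  then obtain m where m: "T = insert m S" "m \<in> N" "m \<notin> S" "T \<notin> W"
    using assms(3) by (auto simp: loyal_children_def)
  then have "N - T = (N - S) - {m}" by auto
  moreover have "card ((N - S) - {m}) < card (N - S)"
    using m assms(1) by (metis DiffI card_Diff1_less finite_Diff)
  ultimately show ?thesis using m False by (simp add: recursion_measure_def)
qed

lemma alpha_aux_fuel_independent:
  assumes "finite N" "S \<subseteq> N"
    and "recursion_measure N W S < n" "recursion_measure N W S < n'"
  shows "alpha_aux n N W k S = alpha_aux n' N W k S"
  using assms(2-)
proof (induction n arbitrary: S n')
  case 0
  then show ?case by simp
next
  case (Suc n)
  then obtain n'' where n': "n' = Suc n''" by (cases n') auto
  have "alpha_aux n N W k T = alpha_aux n'' N W k T" if "T \<in> loyal_children N W S" for T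
  proof (rule Suc.IH)
    show "T \<subseteq> N" using loyal_child_subset[OF Suc.prems(1) that] .
    show "recursion_measure N W T < n" "recursion_measure N W T < n''"
      using recursion_measure_loyal_child_less[OF assms(1) Suc.prems(1) that] Suc.prems(2,3) n'
      by simp_all
  qed
  then show ?case unfolding n' alpha_aux.simps Let_def by (simp cong: sum.cong)
qed

lemma alpha_eq_alpha_aux:
  assumes "finite N" "S \<subseteq> N" "card N < n"
  shows "alpha N W k S = alpha_aux n N W k S"
  unfolding alpha_def
  by (rule alpha_aux_fuel_independent[OF assms(1,2)])
    (use recursion_measure_le_card[OF assms(1,2), of W] assms(3) in simp_all)

lemma mem_add_yes_blocker_W_iff:
  assumes "W \<subseteq> Pow N" "p0 \<notin> N"
  shows "X \<in> add_yes_blocker_W W p0 \<longleftrightarrow> p0 \<in> X \<and> X - {p0} \<in> W"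
  unfolding add_yes_blocker_W_def
proof
  assume "X \<in> {insert p0 S | S. S \<in> W}"
  then obtain S where S: "X = insert p0 S" "S \<in> W" by blast
  with assms have "X - {p0} = S" by blast
  with S show "p0 \<in> X \<and> X - {p0} \<in> W" by simp
next
  assume "p0 \<in> X \<and> X - {p0} \<in> W"
  then have "X = insert p0 (X - {p0})" "X - {p0} \<in> W" by auto
  then show "X \<in> {insert p0 S | S. S \<in> W}" by blast
qed

lemma loyal_children_add_yes_blocker:
  assumes "W \<subseteq> Pow N" "p0 \<notin> N" "S \<subseteq> N"
  shows "loyal_children (insert p0 N) (add_yes_blocker_W W p0) (insert p0 S)
           = insert p0 ` loyal_children N W S"
proof -
  let ?W' = "add_yes_blocker_W W p0"
  note mem = mem_add_yes_blocker_W_iff[OF assms(1,2)]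
  have p0: "p0 \<notin> S" using assms(2,3) by blast
  show ?thesis
  proof (cases "S \<in> W")
    case True
    have win: "insert p0 S \<in> ?W'" using True p0 mem by simp
    have child: "m \<in> insert p0 S \<and> insert p0 S - {m} \<in> ?W' \<longleftrightarrow> m \<in> S \<and> S - {m} \<in> W" for m
      using p0 mem by (cases "m = p0") (simp_all add: insert_Diff_if)
    have "loyal_children (insert p0 N) ?W' (insert p0 S)
        = {insert p0 S - {m} | m. m \<in> insert p0 S \<and> insert p0 S - {m} \<in> ?W'}"
      unfolding loyal_children_def if_P[OF win] ..
    also have "\<dots> = {insert p0 (S - {m}) | m. m \<in> S \<and> S - {m} \<in> W}"
      by (intro Collect_cong ex_cong1) (use child p0 in auto)
    also have "\<dots> = insert p0 ` loyal_children N W S"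
      unfolding loyal_children_def if_P[OF True] by blast
    finally show ?thesis .
  next
    case False
    have lose: "insert p0 S \<notin> ?W'" using False p0 mem by simp
    have child: "m \<in> insert p0 N \<and> m \<notin> insert p0 S \<and> insert m (insert p0 S) \<notin> ?W'
        \<longleftrightarrow> m \<in> N \<and> m \<notin> S \<and> insert m S \<notin> W" for m
      using p0 assms(2) mem by (cases "m = p0") (simp_all add: insert_Diff_if)
    have "loyal_children (insert p0 N) ?W' (insert p0 S)
        = {insert m (insert p0 S) | m. m \<in> insert p0 N \<and> m \<notin> insert p0 S
                                     \<and> insert m (insert p0 S) \<notin> ?W'}"
      unfolding loyal_children_def if_not_P[OF lose] ..
    also have "\<dots> = {insert p0 (insert m S) | m. m \<in> N \<and> m \<notin> S \<and> insert m S \<notin> W}"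
      using child by (blast intro: insert_commute)
    also have "\<dots> = insert p0 ` loyal_children N W S"
      unfolding loyal_children_def if_not_P[OF False] by blast
    finally show ?thesis .
  qed
qed

lemma alpha_aux_add_yes_blocker:
  assumes "W \<subseteq> Pow N" "p0 \<notin> N" "k \<noteq> p0" "S \<subseteq> N"
  shows "alpha_aux n (insert p0 N) (add_yes_blocker_W W p0) k (insert p0 S) = alpha_aux n N W k S"
  using assms(4)
proof (induction n arbitrary: S)
  case 0
  then show ?case by simp
next
  case (Suc n)
  let ?W' = "add_yes_blocker_W W p0"
  note mem = mem_add_yes_blocker_W_iff[OF assms(1,2)]
  have p0: "p0 \<notin> S" using assms(2) Suc.prems by blast
  have "insert p0 S \<in> ?W' \<longleftrightarrow> S \<in> W"
    and "insert p0 S - {k} \<in> ?W' \<longleftrightarrow> S - {k} \<in> W"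
    and "insert k (insert p0 S) \<in> ?W' \<longleftrightarrow> insert k S \<in> W"
    using mem p0 assms(3) by (simp_all add: insert_Diff_if insert_commute)
  then have dec: "decisive ?W' k (insert p0 S) \<longleftrightarrow> decisive W k S"
    and succ: "successful ?W' k (insert p0 S) \<longleftrightarrow> successful W k S"
    using assms(3) by (auto simp: decisive_def yes_decisive_def no_decisive_def successful_def)
  have children: "loyal_children (insert p0 N) ?W' (insert p0 S) = insert p0 ` loyal_children N W S"
    by (rule loyal_children_add_yes_blocker[OF assms(1,2) Suc.prems])
  have inj: "inj_on (insert p0) (loyal_children N W S)"
  proof (rule inj_onI)
    fix T T' assume "T \<in> loyal_children N W S" "T' \<in> loyal_children N W S"
      and "insert p0 T = insert p0 T'"
    moreover have "p0 \<notin> T" "p0 \<notin> T'"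
      using loyal_child_subset[OF Suc.prems] calculation(1,2) assms(2) by blast+
    ultimately show "T = T'" by (metis Diff_insert_absorb)
  qed
  have "(\<Sum>T\<in>insert p0 ` loyal_children N W S. alpha_aux n (insert p0 N) ?W' k T)
      = (\<Sum>T\<in>loyal_children N W S. alpha_aux n N W k T)"
    using Suc.IH loyal_child_subset[OF Suc.prems] by (simp add: sum.reindex[OF inj])
  then show ?case using dec succ children card_image[OF inj] by (simp add: Let_def)
qed

lemma alpha_add_yes_blocker:
  assumes "finite N" "W \<subseteq> Pow N" "p0 \<notin> N" "k \<noteq> p0" "S \<subseteq> N"
  shows "alpha (insert p0 N) (add_yes_blocker_W W p0) k (insert p0 S) = alpha N W k S"
proof -
  have "alpha (insert p0 N) (add_yes_blocker_W W p0) k (insert p0 S)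
      = alpha_aux (Suc (Suc (card N))) (insert p0 N) (add_yes_blocker_W W p0) k (insert p0 S)"
    using assms(1,3) by (simp add: alpha_def)
  also have "\<dots> = alpha_aux (Suc (Suc (card N))) N W k S"
    by (rule alpha_aux_add_yes_blocker[OF assms(2-5)])
  also have "\<dots> = alpha N W k S"
    by (rule alpha_eq_alpha_aux[OF assms(1,5), symmetric]) simp
  finally show ?thesis .
qed

lemma alpha_losing_yes_voter:
  assumes "k \<in> S" "S \<notin> W"
  shows "alpha N W k S = 0"
  using assms by (simp add: alpha_def decisive_def yes_decisive_def no_decisive_def successful_def)

lemma sum_subsets_containing_insert:
  assumes "finite N" "p \<notin> N" "k \<noteq> p"
  shows "(\<Sum>S | S \<subseteq> insert p N \<and> k \<in> S. f S) = (\<Sum>S | S \<subseteq> N \<and> k \<in> S. f (insert p S) + f S)"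
proof -
  let ?B = "{S. S \<subseteq> N \<and> k \<in> S}"
  have split: "{S. S \<subseteq> insert p N \<and> k \<in> S} = insert p ` ?B \<union> ?B"
  proof (rule set_eqI)
    fix S
    have "S \<subseteq> insert p N \<Longrightarrow> p \<in> S \<Longrightarrow> S = insert p (S - {p}) \<and> S - {p} \<subseteq> N" by blast
    then show "S \<in> {S. S \<subseteq> insert p N \<and> k \<in> S} \<longleftrightarrow> S \<in> insert p ` ?B \<union> ?B"
      using assms(3) by (cases "p \<in> S") (auto simp: image_iff)
  qed
  have inj: "inj_on (insert p) ?B"
    by (rule inj_onI) (use assms(2) in \<open>metis Diff_insert_absorb mem_Collect_eq subsetD\<close>)
  have "(\<Sum>S | S \<subseteq> insert p N \<and> k \<in> S. f S) = (\<Sum>S\<in>insert p ` ?B. f S) + (\<Sum>S\<in>?B. f S)"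
    unfolding split using assms(1,2) by (intro sum.union_disjoint) auto
  also have "\<dots> = (\<Sum>S\<in>?B. f (insert p S) + f S)"
    by (simp add: sum.reindex[OF inj] sum.distrib)
  finally show ?thesis .
qed

lemma RM_yes_add_yes_blocker:
  assumes "svg N W" "p0 \<notin> N" "k \<in> N"
  shows "RM_yes (insert p0 N) (add_yes_blocker_W W p0) k = RM_yes N W k / 2"
proof -
  let ?W' = "add_yes_blocker_W W p0"
  have N: "finite N" "W \<subseteq> Pow N" using assms(1) by (auto simp: svg_def)
  have kp0: "k \<noteq> p0" using assms(2,3) by blast
  have "alpha (insert p0 N) ?W' k (insert p0 S) + alpha (insert p0 N) ?W' k S = alpha N W k S"
    if "S \<subseteq> N" "k \<in> S" for S
  proof -
    have "S \<notin> ?W'" using that assms(2) mem_add_yes_blocker_W_iff[OF N(2) assms(2)] by blast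
    then show ?thesis
      using alpha_add_yes_blocker[OF N assms(2) kp0 that(1)] alpha_losing_yes_voter[OF that(2)]
      by simp
  qed
  then have "(\<Sum>S | S \<subseteq> insert p0 N \<and> k \<in> S. alpha (insert p0 N) ?W' k S)
      = (\<Sum>S | S \<subseteq> N \<and> k \<in> S. alpha N W k S)"
    unfolding sum_subsets_containing_insert[OF N(1) assms(2) kp0] by (intro sum.cong) auto
  then show ?thesis using N(1) assms(2) by (simp add: RM_yes_def)
qed

theorem lemma3:
  fixes N :: "'a set" and W :: "'a set set" and p0 i j :: 'a
  assumes "svg N W"
    and "p0 \<notin> N"
    and "i \<in> N" and "j \<in> N"
    and "\<not> dummy N W j"
  shows "RM_yes N W i / RM_yes N W j =
         RM_yes (insert p0 N) (add_yes_blocker_W W p0) i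
           / RM_yes (insert p0 N) (add_yes_blocker_W W p0) j"
  unfolding RM_yes_add_yes_blocker[OF assms(1-3)] RM_yes_add_yes_blocker[OF assms(1,2,4)]
  by simp

end
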